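(* Let $n\geq 2$ and let $(A,\cdot,[\cdot,\ldots,\cdot])$ be a transposed Poisson $n$-Lie algebra with $[A,\ldots,A]=A$. Then every ideal $I\neq A$ of the $n$-Lie algebra $(A,[\cdot,\ldots,\cdot])$ is a quasi-ideal, i.e. satisfies $[I,A,\ldots,A]\subseteq I$ and $[A\cdot I,A,\ldots,A]\subseteq I$.
   Context: An $n$-Lie algebra is a vector space $L$ with an $n$-linear skew-symmetric bracket satisfying $[[x_1,\ldots,x_n],y_2,\ldots,y_n]=\sum_{i=1}^n[x_1,\ldots,x_{i-1},[x_i,y_2,\ldots,y_n],x_{i+1},\ldots,x_n]$. A transposed Poisson $n$-Lie algebra (over $\mathbb{C}$) is a triple $(A,\cdot,[\cdot,\ldots,\cdot])$ where $(A,\cdot)$ is commutative associative, $(A,[\cdot,\ldots,\cdot])$ is an $n$-Lie algebra, and $n\,h\,[a_1,\ldots,a_n]=\sum_{i=1}^n[a_1,\ldots,h a_i,\ldots,a_n]$ for all $h,a_i\in A$. An ideal of the $n$-Lie algebra is a subspace $I$ with $[I,A,\ldots,A]\subseteq I$. A quasi-ideal of the transposed Poisson $n$-Lie algebra is a proper subspace $I\subsetneq A$ with $[I,A,\ldots,A]\subseteq I$ and $[A\cdot I,A,\ldots,A]\subseteq I$, where $A\cdot I$ is the span of products $au$, $a\in A,u\in I$, and $[A,\ldots,A]$ is the span of all brackets. *)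

theory Defs
  imports "HOL-Analysis.Analysis"
begin

definition bilinear_op :: "(complex \<Rightarrow> 'a::ab_group_add \<Rightarrow> 'a) \<Rightarrow> ('a \<Rightarrow> 'a \<Rightarrow> 'a) \<Rightarrow> bool" where
  "bilinear_op sc m \<longleftrightarrow>
     (\<forall>x y z. m (x + y) z = m x z + m y z) \<and>
     (\<forall>x y z. m x (y + z) = m x y + m x z) \<and>
     (\<forall>c x y. m (sc c x) y = sc c (m x y)) \<and>
     (\<forall>c x y. m x (sc c y) = sc c (m x y))"

definition comm_assoc_algebra :: "(complex \<Rightarrow> 'a::ab_group_add \<Rightarrow> 'a) \<Rightarrow> ('a \<Rightarrow> 'a \<Rightarrow> 'a) \<Rightarrow> bool" where
  "comm_assoc_algebra sc m \<longleftrightarrow>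
     vector_space sc \<and> bilinear_op sc m \<and>
     (\<forall>x y. m x y = m y x) \<and> (\<forall>x y z. m (m x y) z = m x (m y z))"

text \<open>n-ary brackets are functions on lists; only lists of length n are meaningful.\<close>
definition multilinear :: "(complex \<Rightarrow> 'a::ab_group_add \<Rightarrow> 'a) \<Rightarrow> nat \<Rightarrow> ('a list \<Rightarrow> 'a) \<Rightarrow> bool" where
  "multilinear sc n br \<longleftrightarrow>
     (\<forall>xs i x y. length xs = n \<longrightarrow> i < n \<longrightarrow>
        br (xs[i := x + y]) = br (xs[i := x]) + br (xs[i := y])) \<and>
     (\<forall>xs i c x. length xs = n \<longrightarrow> i < n \<longrightarrow>
        br (xs[i := sc c x]) = sc c (br (xs[i := x])))"

definition skew_symmetric :: "nat \<Rightarrow> ('a::ab_group_add list \<Rightarrow> 'a) \<Rightarrow> bool" where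
  "skew_symmetric n br \<longleftrightarrow>
     (\<forall>xs i j. length xs = n \<longrightarrow> i < n \<longrightarrow> j < n \<longrightarrow> i \<noteq> j \<longrightarrow>
        br (xs[i := xs ! j, j := xs ! i]) = - br xs)"

text \<open>Filippov identity:
 [[x_1..x_n],y_2..y_n] = sum_i [x_1..,[x_i,y_2..y_n],..x_n]; ys = [y_2,...,y_n].\<close>
definition filippov_identity :: "nat \<Rightarrow> ('a::ab_group_add list \<Rightarrow> 'a) \<Rightarrow> bool" where
  "filippov_identity n br \<longleftrightarrow>
     (\<forall>xs ys. length xs = n \<longrightarrow> length ys = n - 1 \<longrightarrow>
        br (br xs # ys) = (\<Sum>i<n. br (xs[i := br ((xs ! i) # ys)])))"

definition n_lie_algebra :: "(complex \<Rightarrow> 'a::ab_group_add \<Rightarrow> 'a) \<Rightarrow> nat \<Rightarrow> ('a list \<Rightarrow> 'a) \<Rightarrow> bool" where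
  "n_lie_algebra sc n br \<longleftrightarrow>
     vector_space sc \<and> multilinear sc n br \<and> skew_symmetric n br \<and> filippov_identity n br"

definition transposed_poisson_n_lie :: "(complex \<Rightarrow> 'a::ab_group_add \<Rightarrow> 'a) \<Rightarrow> nat \<Rightarrow>
    ('a \<Rightarrow> 'a \<Rightarrow> 'a) \<Rightarrow> ('a list \<Rightarrow> 'a) \<Rightarrow> bool" where
  "transposed_poisson_n_lie sc n m br \<longleftrightarrow>
     comm_assoc_algebra sc m \<and> n_lie_algebra sc n br \<and>
     (\<forall>h as. length as = n \<longrightarrow>
        sc (of_nat n) (m h (br as)) = (\<Sum>i<n. br (as[i := m h (as ! i)])))"

definition bracket_span :: "(complex \<Rightarrow> 'a::ab_group_add \<Rightarrow> 'a) \<Rightarrow> ('a list \<Rightarrow> 'a) \<Rightarrow> 'a set list \<Rightarrow> 'a set" where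
  "bracket_span sc br Xs =
     module.span sc {br xs | xs. length xs = length Xs \<and> (\<forall>i < length Xs. xs ! i \<in> Xs ! i)}"

definition prod_span :: "(complex \<Rightarrow> 'a::ab_group_add \<Rightarrow> 'a) \<Rightarrow> ('a \<Rightarrow> 'a \<Rightarrow> 'a) \<Rightarrow> 'a set \<Rightarrow> 'a set" where
  "prod_span sc m I = module.span sc {m a u | a u. u \<in> I}"

definition n_lie_ideal :: "(complex \<Rightarrow> 'a::ab_group_add \<Rightarrow> 'a) \<Rightarrow> nat \<Rightarrow> ('a list \<Rightarrow> 'a) \<Rightarrow> 'a set \<Rightarrow> bool" where
  "n_lie_ideal sc n br I \<longleftrightarrow>
     module.subspace sc I \<and> bracket_span sc br (I # replicate (n - 1) UNIV) \<subseteq> I"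

definition quasi_ideal :: "(complex \<Rightarrow> 'a::ab_group_add \<Rightarrow> 'a) \<Rightarrow> nat \<Rightarrow> ('a \<Rightarrow> 'a \<Rightarrow> 'a) \<Rightarrow>
    ('a list \<Rightarrow> 'a) \<Rightarrow> 'a set \<Rightarrow> bool" where
  "quasi_ideal sc n m br I \<longleftrightarrow>
     module.subspace sc I \<and> I \<noteq> UNIV \<and>
     bracket_span sc br (I # replicate (n - 1) UNIV) \<subseteq> I \<and>
     bracket_span sc br (prod_span sc m I # replicate (n - 1) UNIV) \<subseteq> I"

end

theory Submission
  imports Defs
begin

text \<open>Fix u \<in> I and h \<in> A, and write x ~ y for x - y \<in> I. In a bracket with an entry
from I, all terms of the transposed Poisson identity but one lie in I, so
n h [.., u, ..] ~ [.., h u, ..]. For P = [u, [y_1..y_n], a_3..a_n] and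
X = [h u, [y_1..y_n], a_3..a_n] this gives n h P ~ X. Expanding P instead by skew-symmetry and
the Filippov identity into the brackets [y_1.., [y_i, u, a_3..a_n], ..y_n] and applying the same
congruence twice to each of them gives n^2 h P ~ X. Hence (n - 1) X \<in> I, so X \<in> I as
n \<ge> 2. Since A = [A..A], the second slot of X ranges over all of A, and linearity in the first
slot extends this to [A \<cdot> I, A..A] \<subseteq> I.\<close>

locale n_lie_with_ideal =
  fixes sc :: "complex \<Rightarrow> 'a::ab_group_add \<Rightarrow> 'a"
    and n :: nat
    and br :: "'a list \<Rightarrow> 'a"
    and I :: "'a set"
  assumes n_lie: "n_lie_algebra sc n br"
    and ideal: "n_lie_ideal sc n br I"
begin

sublocale V: vector_space sc
  using n_lie unfolding n_lie_algebra_def by blast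

lemma subspace_ideal: "V.subspace I"
  using ideal unfolding n_lie_ideal_def by blast

lemma bracket_update_add:
  "length xs = n \<Longrightarrow> i < n \<Longrightarrow> br (xs[i := x + y]) = br (xs[i := x]) + br (xs[i := y])"
  using n_lie unfolding n_lie_algebra_def multilinear_def by blast

lemma bracket_update_scale:
  "length xs = n \<Longrightarrow> i < n \<Longrightarrow> br (xs[i := sc c x]) = sc c (br (xs[i := x]))"
  using n_lie unfolding n_lie_algebra_def multilinear_def by blast

lemma bracket_swap:
  "length xs = n \<Longrightarrow> i < n \<Longrightarrow> j < n \<Longrightarrow> i \<noteq> j \<Longrightarrow> br (xs[i := xs ! j, j := xs ! i]) = - br xs"
  using n_lie unfolding n_lie_algebra_def skew_symmetric_def by blast

lemma filippov:
  "length xs = n \<Longrightarrow> length ys = n - 1 \<Longrightarrow>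
     br (br xs # ys) = (\<Sum>i<n. br (xs[i := br (xs ! i # ys)]))"
  using n_lie unfolding n_lie_algebra_def filippov_identity_def by blast

lemma bracket_head_mem_ideal:
  assumes "length xs = n" "0 < n" "xs ! 0 \<in> I"
  shows "br xs \<in> I"
proof -
  have "br xs \<in> bracket_span sc br (I # replicate (n - 1) UNIV)"
    unfolding bracket_span_def
  proof (rule V.span_base, safe intro!: exI[of _ xs])
    show "length xs = length (I # replicate (n - 1) UNIV)" using assms by simp
    fix i assume "i < length (I # replicate (n - 1) UNIV)"
    then show "xs ! i \<in> (I # replicate (n - 1) UNIV) ! i"
      using assms by (cases i) auto
  qed
  then show ?thesis using ideal unfolding n_lie_ideal_def by blast
qed

lemma bracket_mem_ideal:
  assumes xs: "length xs = n" and i: "i < n" and "xs ! i \<in> I"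
  shows "br xs \<in> I"
proof (cases "i = 0")
  case True
  then show ?thesis using assms bracket_head_mem_ideal by simp
next
  case False
  let ?ys = "xs[0 := xs ! i, i := xs ! 0]"
  have "br ?ys \<in> I" using False assms by (intro bracket_head_mem_ideal) simp_all
  moreover have "br ?ys = - br xs" using bracket_swap[OF xs _ i False[symmetric]] i by simp
  ultimately show ?thesis using V.subspace_neg[OF subspace_ideal] by fastforce
qed

lemma bracket_update_diff_mem_ideal:
  assumes xs: "length xs = n" and i: "i < n" and "a - b \<in> I"
  shows "br (xs[i := a]) - br (xs[i := b]) \<in> I"
proof -
  have "br (xs[i := a]) = br (xs[i := b + (a - b)])" by simp
  also have "\<dots> = br (xs[i := b]) + br (xs[i := a - b])" using bracket_update_add[OF xs i] .
  finally have "br (xs[i := a]) - br (xs[i := b]) = br (xs[i := a - b])" by simp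
  moreover have "br (xs[i := a - b]) \<in> I" using assms by (intro bracket_mem_ideal[of _ i]) simp_all
  ultimately show ?thesis by simp
qed

lemma bracket_update_span_mem_ideal:
  assumes xs: "length xs = n" and i: "i < n" and "z \<in> V.span S"
    and gen: "\<And>s. s \<in> S \<Longrightarrow> br (xs[i := s]) \<in> I"
  shows "br (xs[i := z]) \<in> I"
  using \<open>z \<in> V.span S\<close>
proof (induction rule: V.span_induct)
  case base
  have "br (xs[i := 0]) = 0" using bracket_update_scale[OF xs i, of 0 0] by simp
  then show ?case
    using V.subspace_0 V.subspace_add V.subspace_scale subspace_ideal
      bracket_update_add[OF xs i] bracket_update_scale[OF xs i]
    unfolding V.subspace_def by simp
next
  case (step s)
  then show ?case using gen by simp
qed

lemma sum_minus_term_mem_subspace: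
  fixes k :: nat
  assumes "V.subspace S" "i < k" "\<And>j. j < k \<Longrightarrow> j \<noteq> i \<Longrightarrow> f j \<in> S"
  shows "(\<Sum>j<k. f j) - f i \<in> S"
proof -
  have "(\<Sum>j<k. f j) - f i = (\<Sum>j\<in>{..<k} - {i}. f j)"
    using assms(2) by (subst sum.remove[of _ i]) auto
  also have "\<dots> \<in> S" using assms by (intro V.subspace_sum) auto
  finally show ?thesis .
qed

lemma bracket_second_slot_expand:
  assumes "2 \<le> n" and ys: "length ys = n" and "length as = n - 2"
  shows "br (v # br ys # as) = - (\<Sum>i<n. br (ys[i := br (ys ! i # v # as)]))"
proof -
  have "br ((v # br ys # as)[0 := br ys, 1 := v]) = - br (v # br ys # as)"
    using bracket_swap[of "v # br ys # as" 0 1] assms by simp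
  moreover have "br (br ys # v # as) = (\<Sum>i<n. br (ys[i := br (ys ! i # v # as)]))"
    using filippov[OF ys, of "v # as"] assms by simp
  ultimately show ?thesis by (simp add: minus_equation_iff)
qed

end

locale transposed_poisson_with_ideal =
  fixes sc :: "complex \<Rightarrow> 'a::ab_group_add \<Rightarrow> 'a"
    and n :: nat
    and m :: "'a \<Rightarrow> 'a \<Rightarrow> 'a"
    and br :: "'a list \<Rightarrow> 'a"
    and I :: "'a set"
  assumes transposed_poisson: "transposed_poisson_n_lie sc n m br"
    and ideal: "n_lie_ideal sc n br I"
begin

sublocale n_lie_with_ideal sc n br I
  using transposed_poisson ideal
  by unfold_locales (simp add: transposed_poisson_n_lie_def)

lemma mult_additive: "Modules.additive (m h)"
  using transposed_poisson
  unfolding transposed_poisson_n_lie_def comm_assoc_algebra_def bilinear_op_def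
    Modules.additive_def by blast

lemma transposed_poisson_identity:
  "length as = n \<Longrightarrow> sc (of_nat n) (m h (br as)) = (\<Sum>i<n. br (as[i := m h (as ! i)]))"
  using transposed_poisson unfolding transposed_poisson_n_lie_def by blast

lemma transposed_poisson_mod_ideal:
  assumes as: "length as = n" and k: "k < n" and "as ! k \<in> I"
  shows "sc (of_nat n) (m h (br as)) - br (as[k := m h (as ! k)]) \<in> I"
  unfolding transposed_poisson_identity[OF as]
proof (rule sum_minus_term_mem_subspace[OF subspace_ideal k])
  fix j assume "j < n" "j \<noteq> k"
  then show "br (as[j := m h (as ! j)]) \<in> I"
    using assms by (intro bracket_mem_ideal[of _ k]) simp_all
qed

lemma mult_ideal_bracket_bracket_mem_ideal:
  assumes n: "2 \<le> n" and u: "u \<in> I" and ys: "length ys = n" and as: "length as = n - 2"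
  shows "br (m h u # br ys # as) \<in> I"
proof -
  interpret mult: additive "m h" by (rule mult_additive)
  define c where "c = (of_nat n :: complex)"
  define X where "X = br (m h u # br ys # as)"
  define P where "P = br (u # br ys # as)"
  define w where "w i = br (ys ! i # u # as)" for i
  define Q where "Q i = br (ys[i := w i])" for i
  define T where "T i = br (ys[i := br (ys ! i # m h u # as)])" for i
  have len: "length (v # w # as) = n" for v w using as n by simp
  have w_mem: "w i \<in> I" for i
    unfolding w_def using len n u by (intro bracket_mem_ideal[of _ 1]) simp_all
  have P_expand: "P = - (\<Sum>i<n. Q i)"
    unfolding P_def Q_def w_def using bracket_second_slot_expand[OF n ys as] .
  have X_expand: "X = - (\<Sum>i<n. T i)"
    unfolding X_def T_def using bracket_second_slot_expand[OF n ys as] .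
  have X_once: "sc c (m h P) - X \<in> I"
    unfolding c_def P_def X_def
    using transposed_poisson_mod_ideal[OF len, of 0] n u by simp
  have Q_twice: "sc c (sc c (m h (Q i))) - T i \<in> I" if i: "i < n" for i
  proof -
    have ys_upd: "length (ys[i := w i]) = n" using ys by simp
    have "sc c (m h (Q i)) - br (ys[i := m h (w i)]) \<in> I"
      unfolding c_def Q_def using transposed_poisson_mod_ideal[OF ys_upd i] i ys w_mem by simp
    then have "sc c (sc c (m h (Q i))) - sc c (br (ys[i := m h (w i)])) \<in> I"
      using V.subspace_scale[OF subspace_ideal] by (fastforce simp: V.scale_right_diff_distrib)
    moreover have "sc c (m h (w i)) - br (ys ! i # m h u # as) \<in> I"
      unfolding c_def w_def using transposed_poisson_mod_ideal[OF len, of 1] n u by simp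
    then have "sc c (br (ys[i := m h (w i)])) - T i \<in> I"
      unfolding T_def bracket_update_scale[OF ys i, symmetric]
      by (rule bracket_update_diff_mem_ideal[OF ys i])
    ultimately show ?thesis using V.subspace_add[OF subspace_ideal] by fastforce
  qed
  have X_twice: "sc c (sc c (m h P)) - X \<in> I"
  proof -
    have "sc c (sc c (m h P)) - X = - (\<Sum>i<n. sc c (sc c (m h (Q i))) - T i)"
      unfolding P_expand X_expand
      by (simp add: mult.minus mult.sum V.scale_sum_right sum_subtractf)
    also have "\<dots> \<in> I"
      using Q_twice by (intro V.subspace_neg[OF subspace_ideal] V.subspace_sum[OF subspace_ideal]) auto
    finally show ?thesis .
  qed
  have "sc c (sc c (m h P)) - sc c X \<in> I"
    using V.subspace_scale[OF subspace_ideal X_once, of c] by (simp add: V.scale_right_diff_distrib)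
  moreover have "sc (c - 1) X = (sc c (sc c (m h P)) - X) - (sc c (sc c (m h P)) - sc c X)"
    by (simp add: V.scale_left_diff_distrib)
  ultimately have "sc (c - 1) X \<in> I"
    using V.subspace_diff[OF subspace_ideal X_twice] by metis
  then have "sc (1 / (c - 1)) (sc (c - 1) X) \<in> I"
    using V.subspace_scale[OF subspace_ideal] by blast
  moreover have "c - 1 \<noteq> 0" unfolding c_def using n by simp
  ultimately show ?thesis unfolding X_def by simp
qed

lemma mult_ideal_bracket_mem_ideal:
  assumes n: "2 \<le> n" and perfect: "bracket_span sc br (replicate n UNIV) = UNIV"
    and u: "u \<in> I" and zs: "length zs = n - 1"
  shows "br (m h u # zs) \<in> I"
proof -
  obtain z as where zs_eq: "zs = z # as" using zs n by (cases zs) auto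
  have as: "length as = n - 2" using zs zs_eq by simp
  have len: "length (m h u # z # as) = n" using as n by simp
  have z: "z \<in> V.span {br ys | ys. length ys = n}"
    using perfect unfolding bracket_span_def by simp
  have "br ((m h u # z # as)[1 := z]) \<in> I"
  proof (rule bracket_update_span_mem_ideal[OF len _ z])
    show "1 < n" using n by simp
  qed (auto simp: mult_ideal_bracket_bracket_mem_ideal[OF n u _ as])
  then show ?thesis by (simp add: zs_eq)
qed

lemma quasi_ideal_if_perfect:
  assumes n: "2 \<le> n" and perfect: "bracket_span sc br (replicate n UNIV) = UNIV"
    and proper: "I \<noteq> UNIV"
  shows "quasi_ideal sc n m br I"
  unfolding quasi_ideal_def
proof (intro conjI subspace_ideal proper)
  show "bracket_span sc br (I # replicate (n - 1) UNIV) \<subseteq> I"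
    using ideal unfolding n_lie_ideal_def by blast
  show "bracket_span sc br (prod_span sc m I # replicate (n - 1) UNIV) \<subseteq> I"
    unfolding bracket_span_def
  proof (rule V.span_minimal[OF _ subspace_ideal], safe)
    fix xs :: "'a list"
    assume len: "length xs = length (prod_span sc m I # replicate (n - 1) UNIV)"
      and slots: "\<forall>i<length (prod_span sc m I # replicate (n - 1) UNIV).
         xs ! i \<in> (prod_span sc m I # replicate (n - 1) UNIV) ! i"
    obtain x zs where xs_eq: "xs = x # zs" using len by (cases xs) auto
    have zs: "length zs = n - 1" using len xs_eq by simp
    have xs: "length xs = n" using len n by simp
    have head: "xs ! 0 \<in> V.span {m a u | a u. u \<in> I}"
      using slots unfolding prod_span_def by auto
    have "br (xs[0 := xs ! 0]) \<in> I"
    proof (rule bracket_update_span_mem_ideal[OF xs _ head])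
      show "0 < n" using n by simp
    qed (auto simp: xs_eq mult_ideal_bracket_mem_ideal[OF n perfect _ zs])
    then show "br xs \<in> I" by simp
  qed
qed

end

theorem mainTheorem5:
  fixes sc :: "complex \<Rightarrow> 'a::ab_group_add \<Rightarrow> 'a"
    and m :: "'a \<Rightarrow> 'a \<Rightarrow> 'a"
    and br :: "'a list \<Rightarrow> 'a"
    and n :: nat
    and I :: "'a set"
  assumes "n \<ge> 2"
    and "transposed_poisson_n_lie sc n m br"
    and "bracket_span sc br (replicate n UNIV) = UNIV"
    and "n_lie_ideal sc n br I"
    and "I \<noteq> UNIV"
  shows "quasi_ideal sc n m br I"
proof -
  interpret transposed_poisson_with_ideal sc n m br I
    using assms(2,4) by unfold_locales
  show ?thesis using quasi_ideal_if_perfect assms(1,3,5) by blast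
qed

end
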